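(* Let $M$ be a sofic monoid, let $\Sigma=(D_i,\sigma_i)_{i\in I}$ be a sofic approximation of $M$, let $A$ be a finite set, and let $X\subset A^M$ be a subshift. Then $h_\Sigma(X,M,\rho)\le\log|A|$, where $\rho$ is the pseudometric on $X$ given by $\rho(x,y)=0$ if $x(1_M)=y(1_M)$ and $\rho(x,y)=1$ otherwise.
   Context: $A^M$ is the set of maps $M\to A$ with the prodiscrete topology and shift action $(mx)(m')=x(m'm)$; a subshift is a closed $M$-invariant subset. Hamming metric on $\operatorname{Map}(D)$ (maps $D\to D$, $D$ finite non-empty): $d_D^{\mathrm{Ham}}(f,g)=\frac{1}{|D|}|\{v:f(v)\ne g(v)\}|$. A sofic approximation of $M$ is a net $(D_i,\sigma_i)_{i\in I}$ over a directed set, $D_i$ non-empty finite, $\sigma_i\colon M\to\operatorname{Map}(D_i)$, with $\sigma_i(1_M)=\mathrm{Id}_{D_i}$, $\lim_i d^{\mathrm{Ham}}_{D_i}(\sigma_i(m_1m_2),\sigma_i(m_1)\sigma_i(m_2))=0$ for all $m_1,m_2$, and $\lim_i d^{\mathrm{Ham}}_{D_i}(\sigma_i(m_1),\sigma_i(m_2))=1$ for distinct $m_1,m_2$; $M$ is sofic iff it admits one. For a compact space $X$ with continuous $M$-action and continuous pseudometric $\rho$, and non-empty finite $D$: on $X^D$, $\rho_2^D(\varphi,\psi)=(\frac{1}{|D|}\sum_v\rho(\varphi(v),\psi(v))^2)^{1/2}$, $\rho_\infty^D(\varphi,\psi)=\max_v\rho(\varphi(v),\psi(v))$, $(m\varphi)(v)=m\varphi(v)$;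 for finite $F\subset M$, $\delta>0$, $\sigma\colon M\to\operatorname{Map}(D)$: $\operatorname{Map}(X,M,\rho,F,\delta,\sigma)=\{\varphi\in X^D:\rho_2^D(\varphi\circ\sigma(m),m\varphi)\le\delta\ \forall m\in F\}$. $N_\varepsilon(Z,d)$ is the maximal cardinality of a subset of $Z$ with pairwise $d$-distances $\ge\varepsilon$. $h_\Sigma(X,M,\rho)=\sup_{\varepsilon>0}\inf_F\inf_{\delta>0}\limsup_i\frac{1}{|D_i|}\log N_\varepsilon(\operatorname{Map}(X,M,\rho,F,\delta,\sigma_i),\rho_\infty^{D_i})$, infimum over finite $F\subset M$, $\log 0=-\infty$. *)

theory Defs
  imports "HOL-Analysis.Analysis"
begin

definition directed_set :: "'i set \<Rightarrow> ('i \<Rightarrow> 'i \<Rightarrow> bool) \<Rightarrow> bool" where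
  "directed_set I le \<longleftrightarrow> I \<noteq> {} \<and> (\<forall>i\<in>I. le i i)
     \<and> (\<forall>i\<in>I. \<forall>j\<in>I. \<forall>k\<in>I. le i j \<longrightarrow> le j k \<longrightarrow> le i k)
     \<and> (\<forall>i\<in>I. \<forall>j\<in>I. \<exists>k\<in>I. le i k \<and> le j k)"

text \<open>The filter of tails of a directed set; limits of nets are limits along this filter.\<close>
definition net_filter :: "'i set \<Rightarrow> ('i \<Rightarrow> 'i \<Rightarrow> bool) \<Rightarrow> 'i filter" where
  "net_filter I le = (INF i\<in>I. principal {j\<in>I. le i j})"

definition hamming :: "'d set \<Rightarrow> ('d \<Rightarrow> 'd) \<Rightarrow> ('d \<Rightarrow> 'd) \<Rightarrow> real" where
  "hamming D f g = real (card {v\<in>D. f v \<noteq> g v}) / real (card D)"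

definition sofic_approximation ::
  "'i set \<Rightarrow> ('i \<Rightarrow> 'i \<Rightarrow> bool) \<Rightarrow> ('i \<Rightarrow> 'd set) \<Rightarrow> ('i \<Rightarrow> 'm::monoid_mult \<Rightarrow> 'd \<Rightarrow> 'd) \<Rightarrow> bool" where
  "sofic_approximation I le D \<sigma> \<longleftrightarrow> directed_set I le
     \<and> (\<forall>i\<in>I. finite (D i) \<and> D i \<noteq> {})
     \<and> (\<forall>i\<in>I. \<forall>m. \<sigma> i m ` D i \<subseteq> D i)
     \<and> (\<forall>i\<in>I. \<forall>v\<in>D i. \<sigma> i 1 v = v)
     \<and> (\<forall>m1 m2. ((\<lambda>i. hamming (D i) (\<sigma> i (m1 * m2)) (\<sigma> i m1 \<circ> \<sigma> i m2)) \<longlongrightarrow> 0) (net_filter I le))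
     \<and> (\<forall>m1 m2. m1 \<noteq> m2 \<longrightarrow> ((\<lambda>i. hamming (D i) (\<sigma> i m1) (\<sigma> i m2)) \<longlongrightarrow> 1) (net_filter I le))"

definition shift :: "'m::monoid_mult \<Rightarrow> ('m \<Rightarrow> 'a) \<Rightarrow> ('m \<Rightarrow> 'a)" where
  "shift m x = (\<lambda>m'. x (m' * m))"

definition subshift :: "'a set \<Rightarrow> (('m::monoid_mult) \<Rightarrow> 'a) set \<Rightarrow> bool" where
  "subshift A X \<longleftrightarrow> X \<subseteq> (UNIV \<rightarrow>\<^sub>E A)
     \<and> closedin (product_topology (\<lambda>_::'m. discrete_topology A) UNIV) X
     \<and> (\<forall>m. \<forall>x\<in>X. shift m x \<in> X)"

definition elog :: "ereal \<Rightarrow> ereal" where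
  "elog x = (if x \<le> 0 then -\<infinity> else if x = \<infinity> then \<infinity> else ereal (ln (real_of_ereal x)))"

definition rho2 :: "('x \<Rightarrow> 'x \<Rightarrow> real) \<Rightarrow> 'd set \<Rightarrow> ('d \<Rightarrow> 'x) \<Rightarrow> ('d \<Rightarrow> 'x) \<Rightarrow> real" where
  "rho2 \<rho> D \<phi> \<psi> = sqrt ((1 / real (card D)) * (\<Sum>v\<in>D. (\<rho> (\<phi> v) (\<psi> v))\<^sup>2))"

definition rhoinf :: "('x \<Rightarrow> 'x \<Rightarrow> real) \<Rightarrow> 'd set \<Rightarrow> ('d \<Rightarrow> 'x) \<Rightarrow> ('d \<Rightarrow> 'x) \<Rightarrow> real" where
  "rhoinf \<rho> D \<phi> \<psi> = Max ((\<lambda>v. \<rho> (\<phi> v) (\<psi> v)) ` D)"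

definition Map_set ::
  "'x set \<Rightarrow> ('m \<Rightarrow> 'x \<Rightarrow> 'x) \<Rightarrow> ('x \<Rightarrow> 'x \<Rightarrow> real) \<Rightarrow> 'm set \<Rightarrow> real
     \<Rightarrow> 'd set \<Rightarrow> ('m \<Rightarrow> 'd \<Rightarrow> 'd) \<Rightarrow> ('d \<Rightarrow> 'x) set" where
  "Map_set X act \<rho> F \<delta> D \<sigma> =
     {\<phi> \<in> D \<rightarrow>\<^sub>E X. \<forall>m\<in>F. rho2 \<rho> D (\<phi> \<circ> \<sigma> m) (\<lambda>v. act m (\<phi> v)) \<le> \<delta>}"

definition sep_number :: "real \<Rightarrow> 'z set \<Rightarrow> ('z \<Rightarrow> 'z \<Rightarrow> real) \<Rightarrow> ereal" where
  "sep_number \<epsilon> Z d = (SUP S\<in>{S. S \<subseteq> Z \<and> finite S \<and> (\<forall>x\<in>S. \<forall>y\<in>S. x \<noteq> y \<longrightarrow> d x y \<ge> \<epsilon>)}.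
       ereal (real (card S)))"

definition sofic_entropy ::
  "'i set \<Rightarrow> ('i \<Rightarrow> 'i \<Rightarrow> bool) \<Rightarrow> ('i \<Rightarrow> 'd set) \<Rightarrow> ('i \<Rightarrow> 'm \<Rightarrow> 'd \<Rightarrow> 'd)
     \<Rightarrow> 'x set \<Rightarrow> ('m \<Rightarrow> 'x \<Rightarrow> 'x) \<Rightarrow> ('x \<Rightarrow> 'x \<Rightarrow> real) \<Rightarrow> ereal" where
  "sofic_entropy I le D \<sigma> X act \<rho> =
     (SUP \<epsilon>\<in>{0<..}. INF F\<in>{F. finite F}. INF \<delta>\<in>{0<..}.
        Limsup (net_filter I le)
          (\<lambda>i. ereal (1 / real (card (D i))) *
                elog (sep_number \<epsilon> (Map_set X act \<rho> F \<delta> (D i) (\<sigma> i)) (rhoinf \<rho> (D i)))))"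

end

theory Submission
  imports Defs
begin

text \<open>The pseudometric only sees the coordinate at \<open>1\<^sub>M\<close>, so \<open>\<rho>\<^sub>\<infinity>\<close>-separated maps \<open>D \<rightarrow> X\<close> are
  already told apart by their projections \<open>D \<rightarrow> A\<close>. Hence
  \<open>N\<^sub>\<epsilon>(Map(X,M,\<rho>,F,\<delta>,\<sigma>\<^sub>i), \<rho>\<^sub>\<infinity>) \<le> |A|\<^bsup>|D\<^sub>i|\<^esup>\<close> for every \<open>\<epsilon>, F, \<delta>\<close>, and taking
  \<open>(1/|D\<^sub>i|) log\<close> gives the bound \<open>log |A|\<close> at every index. Neither the dynamics of \<open>X\<close> nor the
  sofic conditions on \<open>\<sigma>\<^sub>i\<close> play a role.\<close>

lemma eventually_in_net_filter:
  assumes "I \<noteq> {}"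
  shows "eventually (\<lambda>i. i \<in> I) (net_filter I le)"
proof -
  obtain i0 where "i0 \<in> I" using assms by blast
  then have "net_filter I le \<le> principal {j\<in>I. le i0 j}"
    unfolding net_filter_def by (rule INF_lower)
  moreover have "eventually (\<lambda>i. i \<in> I) (principal {j\<in>I. le i0 j})"
    by (simp add: eventually_principal)
  ultimately show ?thesis by (rule filter_leD)
qed

lemma Map_set_subset_PiE: "Map_set X act \<rho> F \<delta> D \<sigma> \<subseteq> D \<rightarrow>\<^sub>E X"
  unfolding Map_set_def by blast

lemma rhoinf_eq_0:
  assumes "D \<noteq> {}" and "\<And>v. v \<in> D \<Longrightarrow> \<rho> (\<phi> v) (\<psi> v) = 0"
  shows "rhoinf \<rho> D \<phi> \<psi> = 0"
proof -
  have "(\<lambda>v. \<rho> (\<phi> v) (\<psi> v)) ` D = {0}" using assms by auto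
  then show ?thesis by (simp add: rhoinf_def)
qed

lemma sep_number_le_card_PiE:
  fixes p :: "'x \<Rightarrow> 'a" and D :: "'d set"
  assumes Z: "Z \<subseteq> D \<rightarrow>\<^sub>E X" and p: "p ` X \<subseteq> A"
    and "finite A" "finite D" "D \<noteq> {}" "\<epsilon> > 0"
    and \<rho>: "\<And>x y. x \<in> X \<Longrightarrow> y \<in> X \<Longrightarrow> p x = p y \<Longrightarrow> \<rho> x y = 0"
  shows "sep_number \<epsilon> Z (rhoinf \<rho> D) \<le> ereal (real (card A ^ card D))"
  unfolding sep_number_def
proof (rule SUP_least, clarify)
  fix S assume SZ: "S \<subseteq> Z" and "finite S"
    and sep: "\<forall>\<phi>\<in>S. \<forall>\<psi>\<in>S. \<phi> \<noteq> \<psi> \<longrightarrow> \<epsilon> \<le> rhoinf \<rho> D \<phi> \<psi>"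
  define proj where "proj \<phi> = restrict (p \<circ> \<phi>) D" for \<phi> :: "'d \<Rightarrow> 'x"
  have "inj_on proj S"
  proof (rule inj_onI, rule ccontr)
    fix \<phi> \<psi> assume "\<phi> \<in> S" "\<psi> \<in> S" "proj \<phi> = proj \<psi>" "\<phi> \<noteq> \<psi>"
    moreover have "\<phi> \<in> D \<rightarrow>\<^sub>E X" "\<psi> \<in> D \<rightarrow>\<^sub>E X"
      using SZ Z \<open>\<phi> \<in> S\<close> \<open>\<psi> \<in> S\<close> by auto
    with \<open>proj \<phi> = proj \<psi>\<close> have "rhoinf \<rho> D \<phi> \<psi> = 0"
      using \<open>D \<noteq> {}\<close>
      by (intro rhoinf_eq_0 \<rho>) (auto simp: proj_def fun_eq_iff split: if_splits)
    ultimately show False using sep \<open>\<epsilon> > 0\<close> by force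
  qed
  moreover have "proj ` S \<subseteq> D \<rightarrow>\<^sub>E A"
    using SZ Z p by (force simp: proj_def)
  ultimately have "card S \<le> card (D \<rightarrow>\<^sub>E A)"
    using \<open>finite A\<close> \<open>finite D\<close> by (metis card_image card_mono finite_PiE)
  then show "ereal (real (card S)) \<le> ereal (real (card A ^ card D))"
    using \<open>finite D\<close> by (simp add: card_PiE)
qed

lemma scaled_elog_le_of_le_power:
  fixes N n :: nat
  assumes "n > 0" and s: "s \<le> ereal (real (N ^ n))"
  shows "ereal (1 / real n) * elog s \<le> elog (ereal (real N))"
proof (cases "s \<le> 0")
  case True
  then show ?thesis using \<open>n > 0\<close> by (simp add: elog_def)
next
  case False
  with s obtain r where r: "s = ereal r" "0 < r" "r \<le> real N ^ n"
    by (cases s) auto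
  then have "N > 0" using \<open>n > 0\<close> by (cases N) (auto simp: power_0_left)
  have "ln r \<le> ln (real N ^ n)" using r by (intro ln_mono) auto
  also have "\<dots> = real n * ln (real N)" using \<open>N > 0\<close> by (simp add: ln_realpow)
  finally have "ln r / real n \<le> ln (real N)" using \<open>n > 0\<close> by (simp add: field_simps)
  then show ?thesis using r \<open>N > 0\<close> by (simp add: elog_def)
qed

theorem lemma5p1:
  fixes I :: "'i set" and le :: "'i \<Rightarrow> 'i \<Rightarrow> bool"
    and D :: "'i \<Rightarrow> 'd set" and \<sigma> :: "'i \<Rightarrow> 'm::monoid_mult \<Rightarrow> 'd \<Rightarrow> 'd"
    and A :: "'a set" and X :: "('m \<Rightarrow> 'a) set"
  assumes "sofic_approximation I le D \<sigma>"
    and "finite A"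
    and "subshift A X"
  shows "sofic_entropy I le D \<sigma> X shift (\<lambda>x y. if x 1 = y 1 then 0 else 1)
           \<le> elog (ereal (real (card A)))"
proof -
  let ?\<rho> = "\<lambda>x y. if x 1 = y 1 then 0 else 1 :: real"
  have D_finite_nonempty: "\<And>i. i \<in> I \<Longrightarrow> finite (D i) \<and> D i \<noteq> {}" and "I \<noteq> {}"
    using assms(1) unfolding sofic_approximation_def directed_set_def by auto
  have "(\<lambda>x. x 1) ` X \<subseteq> A" using assms(3) unfolding subshift_def by auto
  then have bound: "ereal (1 / real (card (D i))) *
      elog (sep_number \<epsilon> (Map_set X shift ?\<rho> F \<delta> (D i) (\<sigma> i)) (rhoinf ?\<rho> (D i)))
      \<le> elog (ereal (real (card A)))" if "i \<in> I" "\<epsilon> > 0" for \<epsilon> F \<delta> i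
    using D_finite_nonempty[OF \<open>i \<in> I\<close>] \<open>finite A\<close> \<open>\<epsilon> > 0\<close>
    by (intro scaled_elog_le_of_le_power sep_number_le_card_PiE[OF Map_set_subset_PiE])
       (auto simp: card_gt_0_iff)
  show ?thesis unfolding sofic_entropy_def
  proof (intro SUP_least INF_lower2[of "{}"] INF_lower2[of 1] Limsup_bounded)
    fix \<epsilon> :: real assume "\<epsilon> \<in> {0<..}"
    from eventually_in_net_filter[OF \<open>I \<noteq> {}\<close>]
    show "\<forall>\<^sub>F i in net_filter I le. ereal (1 / real (card (D i))) *
        elog (sep_number \<epsilon> (Map_set X shift ?\<rho> {} 1 (D i) (\<sigma> i)) (rhoinf ?\<rho> (D i)))
        \<le> elog (ereal (real (card A)))"
      by (rule eventually_mono) (use \<open>\<epsilon> \<in> {0<..}\<close> bound in auto)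
  qed auto
qed

end
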